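(* Let $a,b\colon\mathbb N\to\mathbb Z\setminus\{0\}$ be two injective sequences. Then there exist a probability space $(X,\mathcal X,\mu)$ and measure preserving transformations $T,S\colon X\to X$, both Bernoulli, such that (i) for some $f,g\in L^\infty(\mu)$ the averages $\frac1N\sum_{n=1}^N\int f\circ T^{a(n)}\cdot g\circ S^{b(n)}\,d\mu$ diverge as $N\to\infty$; and (ii) for some $A\in\mathcal X$ with $\mu(A)>0$ one has $\mu(T^{-a(n)}A\cap S^{-b(n)}A)=0$ for every $n\in\mathbb N$.
   Context: A measure preserving transformation $T$ of $(X,\mathcal X,\mu)$ is called Bernoulli if $(X,\mathcal X,\mu,T)$ is isomorphic to a (two-sided) Bernoulli shift on finitely many symbols; in particular it is invertible, so negative powers make sense. *)

theory Defs
  imports "HOL-Probability.Probability"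
begin

definition mp_map :: "'a measure \<Rightarrow> 'b measure \<Rightarrow> ('a \<Rightarrow> 'b) \<Rightarrow> bool" where
  "mp_map M N f \<longleftrightarrow> f \<in> measurable M N \<and>
     (\<forall>A\<in>sets N. emeasure M (f -` A \<inter> space M) = emeasure N A)"

definition invertible_mpt :: "'a measure \<Rightarrow> ('a \<Rightarrow> 'a) \<Rightarrow> bool" where
  "invertible_mpt M T \<longleftrightarrow> mp_map M M T \<and> bij_betw T (space M) (space M) \<and>
     mp_map M M (the_inv_into (space M) T)"

definition ipow :: "'a measure \<Rightarrow> ('a \<Rightarrow> 'a) \<Rightarrow> int \<Rightarrow> 'a \<Rightarrow> 'a" where
  "ipow M T k = (if 0 \<le> k then T ^^ nat k else (the_inv_into (space M) T) ^^ nat (- k))"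

definition bernoulli_shift :: "nat pmf \<Rightarrow> (int \<Rightarrow> nat) measure" where
  "bernoulli_shift p = PiM UNIV (\<lambda>_. measure_pmf p)"

definition shift :: "(int \<Rightarrow> nat) \<Rightarrow> (int \<Rightarrow> nat)" where
  "shift x = (\<lambda>i. x (i + 1))"

definition mpt_iso :: "'a measure \<Rightarrow> ('a \<Rightarrow> 'a) \<Rightarrow> 'b measure \<Rightarrow> ('b \<Rightarrow> 'b) \<Rightarrow> bool" where
  "mpt_iso M T N S \<longleftrightarrow> (\<exists>X0 Y0 \<phi>.
     X0 \<in> sets M \<and> Y0 \<in> sets N \<and>
     emeasure M (space M - X0) = 0 \<and> emeasure N (space N - Y0) = 0 \<and>
     T ` X0 \<subseteq> X0 \<and> S ` Y0 \<subseteq> Y0 \<and>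
     bij_betw \<phi> X0 Y0 \<and>
     mp_map (restrict_space M X0) (restrict_space N Y0) \<phi> \<and>
     mp_map (restrict_space N Y0) (restrict_space M X0) (the_inv_into X0 \<phi>) \<and>
     (\<forall>x\<in>X0. \<phi> (T x) = S (\<phi> x)))"

definition bernoulli :: "'a measure \<Rightarrow> ('a \<Rightarrow> 'a) \<Rightarrow> bool" where
  "bernoulli M T \<longleftrightarrow> invertible_mpt M T \<and>
     (\<exists>p. finite (set_pmf p) \<and> mpt_iso M T (bernoulli_shift p) shift)"

end

theory Submission
  imports Defs
begin

(*
  The probability space is fair coin tossing on Z, i.e. the Bernoulli shift with symbols
  {0,1}.  For a permutation pi of Z, conj_shift pi m is the shift by 4m coordinates
  conjugated by the coordinate permutation pi: (conj_shift pi m x) i = x (pi (inv pi i + 4m)).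
  Reading the coin tosses in blocks of four turns conj_shift pi 1 into the shift on
  sixteen equally likely symbols, so every conj_shift pi 1 is Bernoulli.
  We take T = conj_shift id 1 and S = conj_shift pi 1, where pi fixes 0 and 1 and sends
  4 b(n) to 4 a(n) + 1 and 4 b(n) + 1 to 4 a(n) or to 4 a(n) + 2, according as n does or
  does not lie in a block (4^k, 2 4^k]; injectivity of a, b makes such a pi exist.
  For f = [x 0 = 0], g = [x 1 = 0] the n-th correlation is then 1/2 or 1/4, and the
  Cesaro averages of this sequence oscillate; for A = [x 0 = 0, x 1 = 1] the sets
  T^-a(n) A and S^-b(n) A are disjoint since they prescribe different values of x(4 a(n)+1).
  The file develops, in this order: Bernoulli shifts and coordinate permutations; cylinder
  sets for coin tossing; the block coding, whose push-forward of coin tossing is the uniform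
  Bernoulli shift on sixteen symbols; a criterion for isomorphism mod 0 and the Bernoulli
  property of conj_shift pi 1; the construction of pi; the oscillating averages; the two
  coordinate computations; and finally the theorem.
*)

lemma space_bernoulli_shift [simp]: "space (bernoulli_shift p) = UNIV"
  by (simp add: bernoulli_shift_def space_PiM)

lemma prob_space_bernoulli_shift: "prob_space (bernoulli_shift p)"
  unfolding bernoulli_shift_def by (intro prob_space_PiM prob_space_measure_pmf)

lemma coordinate_set_sets: "{x. x j \<in> B} \<in> sets (bernoulli_shift p)"
proof -
  have "(\<lambda>x. x j) \<in> measurable (bernoulli_shift p) (measure_pmf p)"
    unfolding bernoulli_shift_def by (rule measurable_component_singleton) simp
  from measurable_sets[OF this, of B] show ?thesis by (simp add: vimage_def)
qed

(* Almost every sequence takes all its values in the support of p; the isomorphisms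
   below are only defined on this conull set of sequences. *)
lemma AE_support_sequences: "AE x in bernoulli_shift p. \<forall>k. x k \<in> set_pmf p"
  using AE_measure_pmf[of p] unfolding bernoulli_shift_def
  by (subst AE_all_countable) (auto intro!: AE_PiM_component prob_space_measure_pmf)

lemma support_sequences:
  fixes p :: "nat pmf"
  defines "X \<equiv> {x. \<forall>k. x k \<in> set_pmf p}"
  shows "X \<in> sets (bernoulli_shift p)"
    and "emeasure (bernoulli_shift p) (space (bernoulli_shift p) - X) = 0"
proof -
  have "(\<Inter>k. {x. x k \<in> set_pmf p}) \<in> sets (bernoulli_shift p)"
    using coordinate_set_sets by (intro sets.countable_INT) auto
  moreover have "X = (\<Inter>k. {x. x k \<in> set_pmf p})" unfolding X_def by auto
  ultimately show X: "X \<in> sets (bernoulli_shift p)" by simp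
  have null_set: "space (bernoulli_shift p) - X \<in> sets (bernoulli_shift p)"
    using X by (rule sets.compl_sets)
  have "{x \<in> space (bernoulli_shift p). x \<notin> X} = space (bernoulli_shift p) - X" by blast
  from AE_iff_measurable[OF null_set this]
  show "emeasure (bernoulli_shift p) (space (bernoulli_shift p) - X) = 0"
    using AE_support_sequences[of p] unfolding X_def by simp
qed

lemma mp_map_distr:
  assumes "f \<in> measurable M N" "distr M N f = N"
  shows "mp_map M N f"
  unfolding mp_map_def
proof (intro conjI ballI assms(1))
  fix A assume "A \<in> sets N"
  then show "emeasure M (f -` A \<inter> space M) = emeasure N A"
    using emeasure_distr[OF assms(1), of A] assms(2) by simp
qed

definition reindex :: "(int \<Rightarrow> int) \<Rightarrow> (int \<Rightarrow> nat) \<Rightarrow> (int \<Rightarrow> nat)" where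
  "reindex \<sigma> x = x \<circ> \<sigma>"

lemma reindex_comp: "reindex \<sigma> (reindex \<tau> x) = reindex (\<tau> \<circ> \<sigma>) x"
  by (simp add: reindex_def o_assoc)

lemma reindex_id: "reindex id x = x"
  by (simp add: reindex_def)

lemma reindex_measurable [measurable]:
  "reindex \<sigma> \<in> measurable (bernoulli_shift p) (bernoulli_shift q)"
  unfolding bernoulli_shift_def reindex_def o_def
  by (intro measurable_PiM_single') (auto simp: space_PiM)

lemma reindex_distr:
  assumes "bij \<sigma>"
  shows "distr (bernoulli_shift p) (bernoulli_shift p) (reindex \<sigma>) = bernoulli_shift p"
proof -
  have "distr (PiM UNIV (\<lambda>_. measure_pmf p)) (PiM UNIV (\<lambda>_. measure_pmf p))
          (\<lambda>\<omega>. \<lambda>n\<in>UNIV. \<omega> (\<sigma> n)) = PiM UNIV (\<lambda>_. measure_pmf p)"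
    by (rule distr_PiM_reindex) (use assms in \<open>auto simp: bij_def prob_space_measure_pmf\<close>)
  then show ?thesis unfolding bernoulli_shift_def reindex_def o_def restrict_UNIV by simp
qed

definition conj_shift :: "(int \<Rightarrow> int) \<Rightarrow> int \<Rightarrow> (int \<Rightarrow> nat) \<Rightarrow> (int \<Rightarrow> nat)" where
  "conj_shift \<pi> m = reindex (\<pi> \<circ> (\<lambda>i. i + 4*m) \<circ> inv \<pi>)"

lemma conj_shift_apply: "conj_shift \<pi> m x i = x (\<pi> (inv \<pi> i + 4*m))"
  by (simp add: conj_shift_def reindex_def)

lemma conj_shift_add: "bij \<pi> \<Longrightarrow> conj_shift \<pi> s (conj_shift \<pi> t x) = conj_shift \<pi> (s + t) x"
  by (simp add: conj_shift_apply fun_eq_iff bij_is_inj algebra_simps)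

lemma conj_shift_0: "bij \<pi> \<Longrightarrow> conj_shift \<pi> 0 x = x"
  by (simp add: conj_shift_apply fun_eq_iff bij_is_surj surj_f_inv_f)

lemma conj_shift_mp:
  assumes "bij \<pi>"
  shows "mp_map (bernoulli_shift p) (bernoulli_shift p) (conj_shift \<pi> m)"
proof -
  have "bij (\<lambda>i::int. i + 4*m)" by (rule bij_betwI[where g="\<lambda>i. i - 4*m"]) auto
  then have "bij (\<pi> \<circ> (\<lambda>i. i + 4*m) \<circ> inv \<pi>)"
    using assms by (intro bij_comp bij_imp_bij_inv) auto
  then show ?thesis unfolding conj_shift_def by (intro mp_map_distr reindex_measurable reindex_distr)
qed

lemma conj_shift_bij: "bij \<pi> \<Longrightarrow> bij (conj_shift \<pi> 1)"
  by (rule bij_betwI[where g="conj_shift \<pi> (-1)"]) (simp_all add: conj_shift_add conj_shift_0)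

lemma conj_shift_inv: "bij \<pi> \<Longrightarrow> the_inv_into UNIV (conj_shift \<pi> 1) = conj_shift \<pi> (-1)"
  by (rule ext, rule the_inv_into_f_eq) (simp_all add: bij_is_inj conj_shift_bij conj_shift_add conj_shift_0)

lemma conj_shift_funpow: "bij \<pi> \<Longrightarrow> (conj_shift \<pi> s ^^ n) x = conj_shift \<pi> (s * int n) x"
  by (induction n) (simp_all add: conj_shift_0 conj_shift_add algebra_simps)

lemma ipow_conj_shift:
  assumes "bij \<pi>"
  shows "ipow (bernoulli_shift p) (conj_shift \<pi> 1) m = conj_shift \<pi> m"
  using assms by (auto simp: fun_eq_iff ipow_def conj_shift_inv conj_shift_funpow)

lemma invertible_conj_shift: "bij \<pi> \<Longrightarrow> invertible_mpt (bernoulli_shift p) (conj_shift \<pi> 1)"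
  unfolding invertible_mpt_def by (simp add: conj_shift_mp conj_shift_inv conj_shift_bij)

definition coin_pmf :: "nat pmf" where
  "coin_pmf = pmf_of_set {0,1}"

lemma set_pmf_coin [simp]: "set_pmf coin_pmf = {0,1}"
  by (simp add: coin_pmf_def)

lemma coin_cylinder:
  assumes J: "finite J" and c: "\<And>j. j \<in> J \<Longrightarrow> c j \<in> {0,1}"
  shows "{x. \<forall>j\<in>J. x j = c j} \<in> sets (bernoulli_shift coin_pmf)"
    and "emeasure (bernoulli_shift coin_pmf) {x. \<forall>j\<in>J. x j = c j} = ennreal ((1/2) ^ card J)"
    and "measure (bernoulli_shift coin_pmf) {x. \<forall>j\<in>J. x j = c j} = (1/2) ^ card J"
proof -
  have eq: "{x. \<forall>j\<in>J. x j = c j} = prod_emb UNIV (\<lambda>_. measure_pmf coin_pmf) J (Pi\<^sub>E J (\<lambda>j. {c j}))"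
    unfolding prod_emb_def by (auto simp: space_PiM PiE_iff)
  show "{x. \<forall>j\<in>J. x j = c j} \<in> sets (bernoulli_shift coin_pmf)"
    unfolding eq bernoulli_shift_def using J by (intro sets_PiM_I) auto
  have singleton: "emeasure (measure_pmf coin_pmf) {c j} = ennreal (1/2)" if "j \<in> J" for j
    using c[OF that] unfolding coin_pmf_def
    by (subst measure_pmf.emeasure_eq_measure, subst measure_pmf_of_set) auto
  have "emeasure (bernoulli_shift coin_pmf) {x. \<forall>j\<in>J. x j = c j}
      = (\<Prod>j\<in>J. emeasure (measure_pmf coin_pmf) {c j})"
    unfolding eq bernoulli_shift_def using J by (intro emeasure_PiM_emb prob_space_measure_pmf) auto
  also have "\<dots> = (\<Prod>j\<in>J. ennreal (1/2))"
    by (intro prod.cong refl singleton)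
  also have "\<dots> = ennreal ((1/2) ^ card J)"
    by (subst prod_constant, rule ennreal_power) simp
  finally show emeasure: "emeasure (bernoulli_shift coin_pmf) {x. \<forall>j\<in>J. x j = c j} = ennreal ((1/2) ^ card J)" .
  then show "measure (bernoulli_shift coin_pmf) {x. \<forall>j\<in>J. x j = c j} = (1/2) ^ card J"
    by (simp add: measure_def)
qed

definition nibble_pmf :: "nat pmf" where
  "nibble_pmf = pmf_of_set {0..<16}"

lemma set_pmf_nibble [simp]: "set_pmf nibble_pmf = {0..<16}"
  by (simp add: nibble_pmf_def)

definition nibbles :: "(int \<Rightarrow> nat) \<Rightarrow> (int \<Rightarrow> nat)" where
  "nibbles x = (\<lambda>i. x (4*i) + 2 * x (4*i+1) + 4 * x (4*i+2) + 8 * x (4*i+3))"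

definition bits :: "(int \<Rightarrow> nat) \<Rightarrow> (int \<Rightarrow> nat)" where
  "bits y = (\<lambda>j. (y (j div 4) div 2 ^ nat (j mod 4)) mod 2)"

lemma bits_le_1: "bits y j \<le> 1"
  unfolding bits_def by simp

lemma nibbles_less_16:
  assumes "\<And>k. x k \<le> 1"
  shows "nibbles x i < 16"
  using assms[of "4*i"] assms[of "4*i+1"] assms[of "4*i+2"] assms[of "4*i+3"]
  unfolding nibbles_def by linarith

lemma nibbles_bits:
  assumes "y i < 16"
  shows "nibbles (bits y) i = y i"
proof -
  define v where "v = y i"
  have "v mod 4 = 2*(v div 2 mod 2) + v mod 2" "v mod 8 = 4*(v div 4 mod 2) + v mod 4"
      "v mod 16 = 8*(v div 8 mod 2) + v mod 8"
    using mod_mult2_eq[of v 2 2] mod_mult2_eq[of v 4 2] mod_mult2_eq[of v 8 2] by simp_all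
  then have "v mod 2 + 2 * (v div 2 mod 2) + 4 * (v div 4 mod 2) + 8 * (v div 8 mod 2) = v"
    using assms unfolding v_def by simp
  then show ?thesis using assms unfolding nibbles_def bits_def v_def by simp
qed

lemma binary_digits:
  fixes b0 b1 b2 b3 :: nat
  assumes "b0 \<le> 1" "b1 \<le> 1" "b2 \<le> 1" "b3 \<le> 1"
  shows "(b0 + 2*b1 + 4*b2 + 8*b3) mod 2 = b0" "(b0 + 2*b1 + 4*b2 + 8*b3) div 2 mod 2 = b1"
    "(b0 + 2*b1 + 4*b2 + 8*b3) div 4 mod 2 = b2" "(b0 + 2*b1 + 4*b2 + 8*b3) div 8 mod 2 = b3"
  using assms by (auto simp: le_Suc_eq)

lemma bits_nibbles:
  assumes "\<And>k. x k \<le> 1"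
  shows "bits (nibbles x) j = x j"
proof -
  define i where "i = j div 4"
  have "j = 4*i + j mod 4" unfolding i_def by simp
  moreover have "j mod 4 \<in> {0,1,2,3}" by auto
  ultimately consider "j = 4*i" | "j = 4*i+1" | "j = 4*i+2" | "j = 4*i+3" by auto
  then show ?thesis
    using binary_digits[OF assms assms assms assms, of "4*i" "4*i+1" "4*i+2" "4*i+3"]
    unfolding bits_def nibbles_def by cases simp_all
qed

(* Both codings are measurable: each output coordinate depends on finitely many inputs. *)
lemma nibbles_measurable [measurable]: "nibbles \<in> measurable (bernoulli_shift p) (bernoulli_shift q)"
proof -
  have "(\<lambda>x. x (4*i) + 2 * x (4*i+1) + 4 * x (4*i+2) + 8 * x (4*i+3))
          \<in> measurable (bernoulli_shift p) (count_space UNIV)" for i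
    unfolding bernoulli_shift_def by measurable
  then show ?thesis
    unfolding bernoulli_shift_def nibbles_def
    by (intro measurable_PiM_single') (auto simp: space_PiM cong: measurable_cong_sets)
qed

lemma bits_measurable [measurable]: "bits \<in> measurable (bernoulli_shift p) (bernoulli_shift q)"
proof -
  have "(\<lambda>y. (y (j div 4) div 2 ^ nat (j mod 4)) mod 2) \<in> measurable (bernoulli_shift p) (count_space UNIV)" for j
    unfolding bernoulli_shift_def by measurable
  then show ?thesis
    unfolding bernoulli_shift_def bits_def
    by (intro measurable_PiM_single') (auto simp: space_PiM cong: measurable_cong_sets)
qed

lemma nibbles_on_block:
  assumes "c i < 16" and "\<forall>j. j div 4 = i \<longrightarrow> x j = bits c j"
  shows "nibbles x i = c i"
proof -
  have block: "(4*i + k) div 4 = i" if "k \<in> {0,1,2,3}" for k :: int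
    using that by auto
  have "nibbles x i = nibbles (bits c) i"
    using assms(2) block[of 0] block[of 1] block[of 2] block[of 3] by (simp add: nibbles_def)
  also have "\<dots> = c i" using assms(1) by (rule nibbles_bits)
  finally show ?thesis .
qed

lemma block_indices:
  assumes "finite J"
  shows "finite {j::int. j div 4 \<in> J}" and "card {j::int. j div 4 \<in> J} = 4 * card J"
proof -
  have eq: "{j::int. j div 4 \<in> J} = (\<lambda>(i,k). 4*i + k) ` (J \<times> {0..<4})"
  proof safe
    fix j :: int assume "j div 4 \<in> J"
    then show "j \<in> (\<lambda>(i,k). 4*i + k) ` (J \<times> {0..<4})"
      by (intro image_eqI[of _ _ "(j div 4, j mod 4)"]) auto
  qed auto
  have "inj_on (\<lambda>(i,k). 4*i + (k::int)) (J \<times> {0..<4})"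
    by (rule inj_onI) (auto dest: arg_cong[where f="\<lambda>x. (x div 4, x mod 4)"])
  then show "finite {j::int. j div 4 \<in> J}" "card {j::int. j div 4 \<in> J} = 4 * card J"
    using assms unfolding eq by (simp_all add: card_image card_cartesian_product)
qed

definition block_cylinder :: "int set \<Rightarrow> (int \<Rightarrow> nat) \<Rightarrow> (int \<Rightarrow> nat) set" where
  "block_cylinder J c = {x. \<forall>j\<in>{j. j div 4 \<in> J}. x j = bits c j}"

lemma block_cylinder:
  assumes "finite J"
  shows "block_cylinder J c \<in> sets (bernoulli_shift coin_pmf)"
    and "emeasure (bernoulli_shift coin_pmf) (block_cylinder J c) = ennreal ((1/16) ^ card J)"
proof -
  have bits: "bits c j \<in> {0,1}" for j using bits_le_1[of c j] by auto
  show "block_cylinder J c \<in> sets (bernoulli_shift coin_pmf)"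
    unfolding block_cylinder_def using block_indices[OF assms] bits by (intro coin_cylinder(1))
  have "(1/2::real) ^ (4 * card J) = (1/16) ^ card J"
    by (simp add: power_mult power_divide)
  then show "emeasure (bernoulli_shift coin_pmf) (block_cylinder J c) = ennreal ((1/16) ^ card J)"
    unfolding block_cylinder_def using block_indices[OF assms] bits
    by (subst coin_cylinder(2)) simp_all
qed

lemma nibbles_preimage:
  assumes "\<forall>k. x k \<le> 1"
  shows "(\<forall>i\<in>J. nibbles x i \<in> A i) \<longleftrightarrow> x \<in> (\<Union>c\<in>Pi\<^sub>E J (\<lambda>i. A i \<inter> {..<16}). block_cylinder J c)"
proof
  assume xA: "\<forall>i\<in>J. nibbles x i \<in> A i"
  have "restrict (nibbles x) J \<in> Pi\<^sub>E J (\<lambda>i. A i \<inter> {..<16})"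
    using xA nibbles_less_16 assms by auto
  moreover have "x \<in> block_cylinder J (restrict (nibbles x) J)"
    using bits_nibbles[of x] assms by (auto simp: block_cylinder_def bits_def)
  ultimately show "x \<in> (\<Union>c\<in>Pi\<^sub>E J (\<lambda>i. A i \<inter> {..<16}). block_cylinder J c)" by blast
next
  assume "x \<in> (\<Union>c\<in>Pi\<^sub>E J (\<lambda>i. A i \<inter> {..<16}). block_cylinder J c)"
  then show "\<forall>i\<in>J. nibbles x i \<in> A i"
    using nibbles_on_block by (fastforce simp: block_cylinder_def PiE_iff)
qed

lemma block_cylinders_disjoint:
  "disjoint_family_on (block_cylinder J) (Pi\<^sub>E J (\<lambda>i. A i \<inter> {..<16}))"
  unfolding disjoint_family_on_def
proof (intro ballI impI)
  fix c d assume cd: "c \<in> Pi\<^sub>E J (\<lambda>i. A i \<inter> {..<16})" "d \<in> Pi\<^sub>E J (\<lambda>i. A i \<inter> {..<16})" "c \<noteq> d"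
  show "block_cylinder J c \<inter> block_cylinder J d = {}"
  proof safe
    fix x assume "x \<in> block_cylinder J c" "x \<in> block_cylinder J d"
    then have "c i = d i" if "i \<in> J" for i
      using cd that nibbles_on_block[of c i x] nibbles_on_block[of d i x]
      by (auto simp: block_cylinder_def PiE_iff)
    then have "c = d" using cd by (intro extensionalityI[where A=J]) (auto simp: PiE_iff)
    then show "x \<in> {}" using cd by simp
  qed
qed

lemma emeasure_nibble: "emeasure (measure_pmf nibble_pmf) B = ennreal (card (B \<inter> {..<16}) / 16)"
  unfolding nibble_pmf_def
  by (subst measure_pmf.emeasure_eq_measure, subst measure_pmf_of_set)
    (auto simp: lessThan_atLeast0 Int_commute)

lemma distr_nibbles:
  "distr (bernoulli_shift coin_pmf) (bernoulli_shift nibble_pmf) nibbles = bernoulli_shift nibble_pmf"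
proof (unfold bernoulli_shift_def[of nibble_pmf], rule measure_eqI_PiM_infinite)
  show "finite_measure (distr (bernoulli_shift coin_pmf) (Pi\<^sub>M UNIV (\<lambda>_. measure_pmf nibble_pmf)) nibbles)"
    using prob_space_bernoulli_shift[of coin_pmf]
    by (intro prob_space.finite_measure prob_space.prob_space_distr)
      (auto simp: bernoulli_shift_def[symmetric])
next
  fix A :: "int \<Rightarrow> nat set" and J :: "int set"
  assume J: "finite J" "J \<subseteq> UNIV" and A: "\<And>i. i \<in> J \<Longrightarrow> A i \<in> sets (measure_pmf nibble_pmf)"
  define C where "C = Pi\<^sub>E J (\<lambda>i. A i \<inter> {..<16})"
  define E where "E = prod_emb UNIV (\<lambda>_. measure_pmf nibble_pmf) J (Pi\<^sub>E J A)"
  have E: "E \<in> sets (bernoulli_shift nibble_pmf)"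
    unfolding E_def bernoulli_shift_def using J A by (intro sets_PiM_I) auto
  have preimage: "nibbles -` E = {x. \<forall>i\<in>J. nibbles x i \<in> A i}"
    unfolding E_def prod_emb_def by (auto simp: space_PiM PiE_iff)
  have "emeasure (distr (bernoulli_shift coin_pmf) (bernoulli_shift nibble_pmf) nibbles) E
      = emeasure (bernoulli_shift coin_pmf) (nibbles -` E)"
    using E by (subst emeasure_distr) auto
  also have "\<dots> = emeasure (bernoulli_shift coin_pmf) (\<Union>c\<in>C. block_cylinder J c)"
  proof (rule emeasure_eq_AE)
    show "AE x in bernoulli_shift coin_pmf. x \<in> nibbles -` E \<longleftrightarrow> x \<in> (\<Union>c\<in>C. block_cylinder J c)"
      using AE_support_sequences[of coin_pmf]
    proof eventually_elim
      fix x :: "int \<Rightarrow> nat" assume "\<forall>k. x k \<in> set_pmf coin_pmf"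
      then have "\<forall>k. x k \<le> 1" by (simp add: le_Suc_eq)
      then show "x \<in> nibbles -` E \<longleftrightarrow> x \<in> (\<Union>c\<in>C. block_cylinder J c)"
        unfolding preimage C_def by (simp add: nibbles_preimage)
    qed
    show "nibbles -` E \<in> sets (bernoulli_shift coin_pmf)"
      using measurable_sets[OF nibbles_measurable E] by simp
    show "(\<Union>c\<in>C. block_cylinder J c) \<in> sets (bernoulli_shift coin_pmf)"
      using J block_cylinder(1) unfolding C_def by (intro sets.finite_UN finite_PiE) auto
  qed
  also have "\<dots> = (\<Sum>c\<in>C. emeasure (bernoulli_shift coin_pmf) (block_cylinder J c))"
    using block_cylinders_disjoint J block_cylinder(1) unfolding C_def
    by (intro sum_emeasure[symmetric] finite_PiE) auto
  also have "\<dots> = ennreal (real (card C) * (1/16) ^ card J)"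
    using J by (simp add: block_cylinder(2) ennreal_of_nat_eq_real_of_nat ennreal_mult')
  also have "real (card C) * (1/16) ^ card J = (\<Prod>i\<in>J. real (card (A i \<inter> {..<16})) / 16)"
    using J unfolding C_def by (simp add: card_PiE prod_dividef power_one_over)
  also have "ennreal \<dots> = (\<Prod>i\<in>J. emeasure (measure_pmf nibble_pmf) (A i))"
    by (simp add: emeasure_nibble prod_ennreal)
  also have "\<dots> = emeasure (Pi\<^sub>M UNIV (\<lambda>_. measure_pmf nibble_pmf)) E"
    unfolding E_def using J A by (intro emeasure_PiM_emb[symmetric] prob_space_measure_pmf) auto
  finally show "emeasure (distr (bernoulli_shift coin_pmf) (Pi\<^sub>M UNIV (\<lambda>_. measure_pmf nibble_pmf)) nibbles)
      (prod_emb UNIV (\<lambda>_. measure_pmf nibble_pmf) J (Pi\<^sub>E J A))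
    = emeasure (Pi\<^sub>M UNIV (\<lambda>_. measure_pmf nibble_pmf)) (prod_emb UNIV (\<lambda>_. measure_pmf nibble_pmf) J (Pi\<^sub>E J A))"
    unfolding E_def bernoulli_shift_def .
qed (simp_all add: bernoulli_shift_def)

lemma mp_map_restrict:
  assumes phi: "\<phi> \<in> measurable M N" and push: "distr M N \<phi> = N"
    and X0: "X0 \<in> sets M" "emeasure M (space M - X0) = 0" and Y0: "Y0 \<in> sets N"
    and into: "\<phi> ` X0 \<subseteq> Y0"
  shows "mp_map (restrict_space M X0) (restrict_space N Y0) \<phi>"
  unfolding mp_map_def
proof (intro conjI ballI)
  show "\<phi> \<in> measurable (restrict_space M X0) (restrict_space N Y0)"
    using into by (intro measurable_restrict_space3 phi) auto
  fix A assume "A \<in> sets (restrict_space N Y0)"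
  then have A: "A \<in> sets N" "A \<subseteq> Y0"
    using Y0 sets.sets_into_space[OF Y0] by (auto simp: sets_restrict_space_iff Int_absorb2)
  have preimage: "\<phi> -` A \<inter> space M \<in> sets M" using measurable_sets[OF phi A(1)] .
  have X0_AE: "AE x in M. x \<in> X0"
    using X0 by (subst AE_iff_measurable[of "space M - X0"]) auto
  have "emeasure (restrict_space M X0) (\<phi> -` A \<inter> space (restrict_space M X0)) = emeasure M (\<phi> -` A \<inter> X0)"
    using X0(1) sets.sets_into_space[OF X0(1)]
    by (subst emeasure_restrict_space) (auto simp: Int_absorb2)
  also have "\<dots> = emeasure M (\<phi> -` A \<inter> space M)"
  proof (rule emeasure_eq_AE)
    show "AE x in M. (x \<in> \<phi> -` A \<inter> X0) = (x \<in> \<phi> -` A \<inter> space M)"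
      using X0_AE by eventually_elim (use sets.sets_into_space[OF X0(1)] in auto)
    have "\<phi> -` A \<inter> X0 = (\<phi> -` A \<inter> space M) \<inter> X0" using sets.sets_into_space[OF X0(1)] by blast
    then show "\<phi> -` A \<inter> X0 \<in> sets M" using preimage X0(1) by simp
  qed (rule preimage)
  also have "\<dots> = emeasure N A" using emeasure_distr[OF phi A(1)] push by simp
  also have "\<dots> = emeasure (restrict_space N Y0) A"
    using Y0 sets.sets_into_space[OF Y0] A(2) by (subst emeasure_restrict_space) (auto simp: Int_absorb2)
  finally show "emeasure (restrict_space M X0) (\<phi> -` A \<inter> space (restrict_space M X0))
      = emeasure (restrict_space N Y0) A" .
qed

lemma mp_map_the_inv_into:
  assumes fwd: "mp_map (restrict_space M X0) (restrict_space N Y0) \<phi>"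
    and psi: "\<psi> \<in> measurable N M" and X0: "X0 \<in> sets M" and Y0: "Y0 \<in> sets N"
    and bij: "bij_betw \<phi> X0 Y0" and left_inv: "\<And>x. x \<in> X0 \<Longrightarrow> \<psi> (\<phi> x) = x"
  shows "mp_map (restrict_space N Y0) (restrict_space M X0) (the_inv_into X0 \<phi>)"
  unfolding mp_map_def
proof (intro conjI ballI)
  have inv_eq: "the_inv_into X0 \<phi> y = \<psi> y" if "y \<in> Y0" for y
    using that bij left_inv by (auto simp: bij_betw_def the_inv_into_f_f)
  have space_Y0: "space (restrict_space N Y0) = Y0" using Y0 by simp
  have "\<psi> \<in> measurable (restrict_space N Y0) (restrict_space M X0)"
    using bij left_inv by (intro measurable_restrict_space3 psi) (auto simp: bij_betw_def)
  then show inv_meas: "the_inv_into X0 \<phi> \<in> measurable (restrict_space N Y0) (restrict_space M X0)"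
    by (rule measurable_cong[THEN iffD1, rotated]) (simp add: space_Y0 inv_eq)
  fix A assume A: "A \<in> sets (restrict_space M X0)"
  then have "A \<subseteq> X0"
    using X0 sets.sets_into_space[OF X0] by (auto simp: sets_restrict_space_iff)
  define B where "B = the_inv_into X0 \<phi> -` A \<inter> space (restrict_space N Y0)"
  have "B \<in> sets (restrict_space N Y0)" unfolding B_def using measurable_sets[OF inv_meas A] .
  moreover have "\<phi> -` B \<inter> space (restrict_space M X0) = A"
    unfolding B_def using X0 Y0 \<open>A \<subseteq> X0\<close> bij left_inv inv_eq
    by (auto simp: bij_betw_def inj_on_eq_iff)
  ultimately show "emeasure (restrict_space N Y0) B = emeasure (restrict_space M X0) A"
    using fwd unfolding mp_map_def by metis
qed

lemma mpt_isoI: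
  assumes phi: "\<phi> \<in> measurable M N" and psi: "\<psi> \<in> measurable N M" and push: "distr M N \<phi> = N"
    and X0: "X0 \<in> sets M" "emeasure M (space M - X0) = 0"
    and Y0: "Y0 \<in> sets N" "emeasure N (space N - Y0) = 0"
    and invariant: "T ` X0 \<subseteq> X0" "S ` Y0 \<subseteq> Y0"
    and bij: "bij_betw \<phi> X0 Y0" and left_inv: "\<And>x. x \<in> X0 \<Longrightarrow> \<psi> (\<phi> x) = x"
    and intertwine: "\<And>x. x \<in> X0 \<Longrightarrow> \<phi> (T x) = S (\<phi> x)"
  shows "mpt_iso M T N S"
proof -
  have fwd: "mp_map (restrict_space M X0) (restrict_space N Y0) \<phi>"
    using bij by (intro mp_map_restrict phi push X0 Y0(1)) (auto simp: bij_betw_def)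
  then have "mp_map (restrict_space N Y0) (restrict_space M X0) (the_inv_into X0 \<phi>)"
    by (rule mp_map_the_inv_into[OF _ psi X0(1) Y0(1) bij left_inv])
  then show ?thesis
    unfolding mpt_iso_def using assms fwd by blast
qed

definition coding :: "(int \<Rightarrow> int) \<Rightarrow> (int \<Rightarrow> nat) \<Rightarrow> (int \<Rightarrow> nat)" where
  "coding \<pi> x = nibbles (reindex \<pi> x)"

lemma coding_measurable: "coding \<pi> \<in> measurable (bernoulli_shift coin_pmf) (bernoulli_shift nibble_pmf)"
  unfolding coding_def[abs_def] by (rule measurable_compose[OF reindex_measurable nibbles_measurable])

lemma distr_coding:
  assumes "bij \<pi>"
  shows "distr (bernoulli_shift coin_pmf) (bernoulli_shift nibble_pmf) (coding \<pi>) = bernoulli_shift nibble_pmf"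
proof -
  have "distr (bernoulli_shift coin_pmf) (bernoulli_shift nibble_pmf) (coding \<pi>)
      = distr (distr (bernoulli_shift coin_pmf) (bernoulli_shift coin_pmf) (reindex \<pi>))
          (bernoulli_shift nibble_pmf) nibbles"
    unfolding coding_def[abs_def] by (subst distr_distr) (auto simp: o_def)
  also have "\<dots> = bernoulli_shift nibble_pmf" by (simp add: reindex_distr assms distr_nibbles)
  finally show ?thesis .
qed

lemma coding_bij:
  assumes "bij \<pi>"
  shows "bij_betw (coding \<pi>) {x. \<forall>k. x k \<in> set_pmf coin_pmf} {y. \<forall>k. y k \<in> set_pmf nibble_pmf}"
    and "\<And>x. x \<in> {x. \<forall>k. x k \<in> set_pmf coin_pmf} \<Longrightarrow> reindex (inv \<pi>) (bits (coding \<pi> x)) = x"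
proof -
  have bits_reindex: "\<forall>k. reindex \<pi> x k \<le> 1" if "\<forall>k. x k \<in> set_pmf coin_pmf" for x
    using that by (simp add: reindex_def le_Suc_eq)
  show left_inv: "reindex (inv \<pi>) (bits (coding \<pi> x)) = x" if "x \<in> {x. \<forall>k. x k \<in> set_pmf coin_pmf}" for x
  proof -
    have "bits (nibbles (reindex \<pi> x)) = reindex \<pi> x"
      using bits_reindex[of x] that by (intro ext bits_nibbles) simp
    then show ?thesis unfolding coding_def
      using assms by (simp add: reindex_comp bij_is_surj surj_iff[THEN iffD1] reindex_id)
  qed
  show "bij_betw (coding \<pi>) {x. \<forall>k. x k \<in> set_pmf coin_pmf} {y. \<forall>k. y k \<in> set_pmf nibble_pmf}"
  proof (rule bij_betwI[where g="\<lambda>y. reindex (inv \<pi>) (bits y)"])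
    show "coding \<pi> \<in> {x. \<forall>k. x k \<in> set_pmf coin_pmf} \<rightarrow> {y. \<forall>k. y k \<in> set_pmf nibble_pmf}"
      using bits_reindex nibbles_less_16 by (simp add: coding_def)
    show "(\<lambda>y. reindex (inv \<pi>) (bits y)) \<in> {y. \<forall>k. y k \<in> set_pmf nibble_pmf} \<rightarrow> {x. \<forall>k. x k \<in> set_pmf coin_pmf}"
      using bits_le_1 by (fastforce simp: reindex_def le_Suc_eq)
    show "coding \<pi> (reindex (inv \<pi>) (bits y)) = y" if "y \<in> {y. \<forall>k. y k \<in> set_pmf nibble_pmf}" for y
      using that assms unfolding coding_def
      by (auto simp: reindex_comp bij_is_inj[THEN inv_o_cancel] reindex_id fun_eq_iff nibbles_bits)
  qed (use left_inv in simp)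
qed

(* Shifting the bits by four positions shifts the symbols by one. *)
lemma coding_intertwines:
  assumes "bij \<pi>"
  shows "coding \<pi> (conj_shift \<pi> 1 x) = shift (coding \<pi> x)"
proof -
  have "reindex \<pi> (conj_shift \<pi> 1 x) = (\<lambda>j. reindex \<pi> x (j + 4))"
    using assms by (simp add: reindex_def conj_shift_apply fun_eq_iff bij_is_inj)
  then show ?thesis unfolding coding_def by (simp add: nibbles_def shift_def algebra_simps)
qed

lemma bernoulli_conj_shift:
  assumes "bij \<pi>"
  shows "bernoulli (bernoulli_shift coin_pmf) (conj_shift \<pi> 1)"
  unfolding bernoulli_def
proof (intro conjI exI[of _ nibble_pmf] invertible_conj_shift assms)
  show "finite (set_pmf nibble_pmf)" by simp
  have invariant: "conj_shift \<pi> 1 ` {x. \<forall>k. x k \<in> set_pmf coin_pmf} \<subseteq> {x. \<forall>k. x k \<in> set_pmf coin_pmf}"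
      "shift ` {y. \<forall>k. y k \<in> set_pmf nibble_pmf} \<subseteq> {y. \<forall>k. y k \<in> set_pmf nibble_pmf}"
    by (auto simp: conj_shift_def reindex_def shift_def)
  have decode: "(\<lambda>y. reindex (inv \<pi>) (bits y)) \<in> measurable (bernoulli_shift nibble_pmf) (bernoulli_shift coin_pmf)"
    by (rule measurable_compose[OF bits_measurable reindex_measurable])
  show "mpt_iso (bernoulli_shift coin_pmf) (conj_shift \<pi> 1) (bernoulli_shift nibble_pmf) shift"
    by (rule mpt_isoI[OF coding_measurable decode distr_coding[OF assms]
          support_sequences support_sequences invariant coding_bij(1)[OF assms]])
      (rule coding_bij(2)[OF assms], assumption, rule coding_intertwines[OF assms])
qed

lemma extend_to_permutation:
  fixes d r :: "'k \<Rightarrow> int"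
  assumes d: "inj_on d K" and r: "inj_on r K"
    and inf_d: "infinite (- (d ` K))" and inf_r: "infinite (- (r ` K))"
  shows "\<exists>\<pi>. bij \<pi> \<and> (\<forall>k\<in>K. \<pi> (d k) = r k)"
proof -
  obtain e1 :: "int \<Rightarrow> nat" where e1: "bij_betw e1 (- (d ` K)) UNIV"
    using countableE_infinite[OF _ inf_d] by blast
  obtain e2 :: "int \<Rightarrow> nat" where e2: "bij_betw e2 (- (r ` K)) UNIV"
    using countableE_infinite[OF _ inf_r] by blast
  define g where "g = inv_into (- (r ` K)) e2 \<circ> e1"
  have g: "bij_betw g (- (d ` K)) (- (r ` K))"
    unfolding g_def using e1 bij_betw_inv_into[OF e2] by (rule bij_betw_trans)
  define h where "h = r \<circ> the_inv_into K d"
  have h: "bij_betw h (d ` K) (r ` K)"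
    unfolding h_def using bij_betw_the_inv_into[OF inj_on_imp_bij_betw[OF d]] r
    by (intro bij_betw_trans) (auto simp: inj_on_imp_bij_betw)
  define \<pi> where "\<pi> x = (if x \<in> d ` K then h x else g x)" for x
  have "bij_betw \<pi> (d ` K \<union> - (d ` K)) (r ` K \<union> - (r ` K))"
  proof (rule bij_betw_combine)
    show "bij_betw \<pi> (d ` K) (r ` K)"
      using h by (rule bij_betw_cong[THEN iffD1, rotated]) (simp add: \<pi>_def)
    show "bij_betw \<pi> (- (d ` K)) (- (r ` K))"
      using g by (rule bij_betw_cong[THEN iffD1, rotated]) (simp add: \<pi>_def)
  qed auto
  moreover have "\<pi> (d k) = r k" if "k \<in> K" for k
    using that d by (simp add: \<pi>_def h_def the_inv_into_f_f)
  ultimately show ?thesis by auto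
qed

lemma infinite_compl_missing_residue:
  fixes S :: "int set"
  assumes "\<forall>s\<in>S. s mod 4 \<noteq> 3"
  shows "infinite (- S)"
proof -
  have "inj (\<lambda>k::int. 4*k + 3)" by (auto simp: inj_def)
  then have "infinite (range (\<lambda>k::int. 4*k + 3))"
    using infinite_UNIV_int finite_imageD by blast
  moreover have "range (\<lambda>k::int. 4*k + 3) \<subseteq> - S" using assms by auto
  ultimately show ?thesis using finite_subset by blast
qed

lemma interleaving_permutation:
  fixes a b :: "nat \<Rightarrow> int" and P :: "nat \<Rightarrow> bool"
  assumes ia: "inj_on a {1..}" and ib: "inj_on b {1..}"
    and a0: "\<forall>n\<ge>1. a n \<noteq> 0" and b0: "\<forall>n\<ge>1. b n \<noteq> 0"
  shows "\<exists>\<pi>. bij \<pi> \<and> \<pi> 0 = 0 \<and> \<pi> 1 = 1 \<and> (\<forall>n\<ge>1. \<pi> (4*b n) = 4*a n + 1) \<and>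
     (\<forall>n\<ge>1. \<pi> (4*b n + 1) = (if P n then 4*a n else 4*a n + 2))"
proof -
  define K :: "(nat \<times> nat) set" where "K = {(0,0), (0,1)} \<union> {1,2} \<times> {1..}"
  define d where "d = (\<lambda>(i::nat, n). if i = 0 then int n else if i = 1 then 4 * b n else 4 * b n + 1)"
  define r where "r = (\<lambda>(i::nat, n). if i = 0 then int n else if i = 1 then 4 * a n + 1
       else if P n then 4 * a n else 4 * a n + 2)"
  have residues: "4*x \<noteq> 4*y+1" "4*x \<noteq> 4*y+2" "4*x+1 \<noteq> 4*y+2" "4*x+1 \<noteq> 4*y"
    "4*x+2 \<noteq> 4*y" "4*x+2 \<noteq> 4*y+1" "4*x \<noteq> 1" "4*x+1 \<noteq> 0" "4*x+2 \<noteq> 0" "4*x+2 \<noteq> 1"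
    "4*x = 0 \<longleftrightarrow> x = 0" "4*x+1 = 1 \<longleftrightarrow> x = 0"
    "(4*x) mod 4 = 0" "(4*x+1) mod 4 = 1" "(4*x+2) mod 4 = 2" for x y :: int
    by presburger+
  have "inj_on d K"
    using b0 unfolding inj_on_def K_def d_def by (auto simp: residues dest: inj_onD[OF ib])
  moreover have "inj_on r K"
    using a0 unfolding inj_on_def K_def r_def by (auto simp: residues dest: inj_onD[OF ia] split: if_splits)
  moreover have "infinite (- (d ` K))" "infinite (- (r ` K))"
    by (intro infinite_compl_missing_residue; auto simp: K_def d_def r_def residues)+
  ultimately obtain \<pi> where "bij \<pi>" "\<forall>k\<in>K. \<pi> (d k) = r k"
    using extend_to_permutation by blast
  then show ?thesis
    by (intro exI[of _ \<pi>]) (force simp: K_def d_def r_def)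
qed

(* The positive integers lying in some block (4^k, 2 4^k]: they have no asymptotic density. *)
definition doubling_block :: "nat \<Rightarrow> bool" where
  "doubling_block n \<longleftrightarrow> (\<exists>k. 4^k < n \<and> n \<le> 2 * 4^k)"

lemma sum_split_at:
  fixes f :: "nat \<Rightarrow> real"
  assumes "m \<le> n"
  shows "(\<Sum>i=1..n. f i) = (\<Sum>i=1..m. f i) + (\<Sum>i\<in>{m<..n}. f i)"
proof -
  have "{1..n} = {1..m} \<union> {m<..n}" using assms by auto
  then show ?thesis by (simp add: sum.union_disjoint ivl_disj_int)
qed

lemma partial_sums_on_blocks:
  fixes t :: "nat \<Rightarrow> real"
  assumes t: "\<And>n. n \<ge> 1 \<Longrightarrow> t n = (if doubling_block n then 1/2 else 1/4)"
  shows "(\<Sum>n=1..2*4^k. t n) = (\<Sum>n=1..4^k. t n) + 4^k/2"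
    and "(\<Sum>n=1..4^Suc k. t n) = (\<Sum>n=1..2*4^k. t n) + 4^k/2"
proof -
  have "(\<Sum>n\<in>{4^k<..2*4^k}. t n) = (\<Sum>n\<in>{4^k<..2*4^k::nat}. 1/2)"
    by (rule sum.cong[OF refl]) (auto simp: t doubling_block_def)
  also have "\<dots> = 4^k/2" by simp
  finally show "(\<Sum>n=1..2*4^k. t n) = (\<Sum>n=1..4^k. t n) + 4^k/2"
    using sum_split_at[of "4^k" "2*4^k" t] by simp
  have "\<not> doubling_block n" if n: "n \<in> {2*4^k<..4^Suc k}" for n
  proof -
    have "\<not> (4^j < n \<and> n \<le> 2*4^j)" for j :: nat
    proof (cases "j \<le> k")
      case True
      then have "(4::nat)^j \<le> 4^k" by (rule power_increasing) simp
      then show ?thesis using n by (simp del: power_increasing_iff)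
    next
      case False
      then have "(4::nat)^Suc k \<le> 4^j" by (intro power_increasing) auto
      then show ?thesis using n by (simp del: power_increasing_iff power_Suc)
    qed
    then show ?thesis by (simp add: doubling_block_def)
  qed
  then have "(\<Sum>n\<in>{2*4^k<..4^Suc k}. t n) = (\<Sum>n\<in>{2*4^k<..4^Suc k::nat}. 1/4)"
    by (intro sum.cong refl) (auto simp: t)
  also have "\<dots> = 4^k/2" by simp
  finally show "(\<Sum>n=1..4^Suc k. t n) = (\<Sum>n=1..2*4^k. t n) + 4^k/2"
    using sum_split_at[of "2*4^k" "4^Suc k" t] by simp
qed

(* Along N = 4^k the averages would have to satisfy L = L/2 + 1/8, along N = 2 4^k
   they would have to satisfy L = L/2 + 1/4: so they cannot converge. *)
lemma cesaro_averages_diverge: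
  fixes t :: "nat \<Rightarrow> real"
  assumes t: "\<And>n. n \<ge> 1 \<Longrightarrow> t n = (if doubling_block n then 1/2 else 1/4)"
  shows "\<not> convergent (\<lambda>N. (\<Sum>n=1..N. t n) / real N)"
proof
  define s where "s N = (\<Sum>n=1..N. t n)" for N
  assume "convergent (\<lambda>N. (\<Sum>n=1..N. t n) / real N)"
  then obtain L where L: "(\<lambda>N. s N / real N) \<longlonglongrightarrow> L" unfolding convergent_def s_def by blast
  define u where "u k = s (4^k) / 4^k" for k
  define v where "v k = s (2*4^k) / (2*4^k)" for k
  have vu: "v k = u k / 2 + 1/4" for k
    using partial_sums_on_blocks(1)[OF t, of k] unfolding u_def v_def s_def by (simp add: field_simps)
  have uv: "u (Suc k) = v k / 2 + 1/8" for k
    using partial_sums_on_blocks(2)[OF t, of k] unfolding u_def v_def s_def by (simp add: field_simps)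
  have "strict_mono (\<lambda>k::nat. (4::nat)^k)" by (rule strict_monoI) simp
  from LIMSEQ_subseq_LIMSEQ[OF L this] have u: "u \<longlonglongrightarrow> L" unfolding u_def by (simp add: o_def)
  have "strict_mono (\<lambda>k::nat. 2*(4::nat)^k)" by (rule strict_monoI) simp
  from LIMSEQ_subseq_LIMSEQ[OF L this] have v: "v \<longlonglongrightarrow> L" unfolding v_def by (simp add: o_def)
  have "v \<longlonglongrightarrow> L/2 + 1/4" unfolding vu by (intro tendsto_intros u) simp
  then have "L = L/2 + 1/4" using v LIMSEQ_unique by blast
  moreover have "(\<lambda>k. u (Suc k)) \<longlonglongrightarrow> L/2 + 1/8" unfolding uv by (intro tendsto_intros v) simp
  then have "L = L/2 + 1/8" using LIMSEQ_Suc[OF u] LIMSEQ_unique by blast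
  ultimately show False by simp
qed

(* The correlation of [x 0 = 0] read through T^m = conj_shift id m with [x 1 = 0] read through
   S^k = conj_shift pi k: both functions inspect one coordinate, 4m and pi(4k+1). *)
lemma coordinate_correlation:
  assumes "bij \<pi>" "\<pi> 1 = 1"
  shows "(\<integral>x. indicator {x. x 0 = 0} (conj_shift id m x) * indicator {x. x 1 = 0} (conj_shift \<pi> k x)
      \<partial>bernoulli_shift coin_pmf) = ((1/2) ^ card {4*m, \<pi> (4*k + 1)} :: real)"
proof -
  have "inv \<pi> 1 = 1" using assms by (simp add: bij_is_inj inv_f_eq)
  then have "(\<lambda>x. indicator {x. x 0 = 0} (conj_shift id m x) * indicator {x. x 1 = 0} (conj_shift \<pi> k x))
      = (indicator {x. \<forall>j\<in>{4*m, \<pi> (4*k + 1)}. x j = 0} :: _ \<Rightarrow> real)"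
    by (auto simp: fun_eq_iff conj_shift_apply indicator_def add.commute)
  then show ?thesis
    using coin_cylinder[of "{4*m, \<pi> (4*k + 1)}" "\<lambda>_. 0"] by simp
qed

(* If pi fixes 0 and sends 4k to 4m + 1, then for A = [x 0 = 0, x 1 = 1] the event
   T^m x \<in> A asks x(4m+1) = 1 while S^k x \<in> A asks x(4m+1) = 0. *)
lemma shifted_cylinders_disjoint:
  assumes "bij \<pi>" "\<pi> 0 = 0" "\<pi> (4*k) = 4*m + 1"
  shows "conj_shift id m -` {x. x 0 = 0 \<and> x 1 = 1} \<inter> conj_shift \<pi> k -` {x. x 0 = 0 \<and> x 1 = 1} = {}"
proof -
  have "inv \<pi> 0 = 0" using assms by (simp add: bij_is_inj inv_f_eq)
  then show ?thesis using assms(3) by (auto simp: conj_shift_apply add.commute)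
qed

lemma two_coordinate_event:
  shows "{x. x 0 = 0 \<and> x 1 = 1} \<in> sets (bernoulli_shift coin_pmf)"
    and "measure (bernoulli_shift coin_pmf) {x. x 0 = 0 \<and> x 1 = 1} = 1/4"
proof -
  have "finite {0,1::int}" "\<And>j. j \<in> {0,1::int} \<Longrightarrow> (if j = 0 then 0 else 1::nat) \<in> {0,1}" by auto
  note cylinder = coin_cylinder[of "{0,1::int}" "\<lambda>j. if j = 0 then 0 else 1", OF this]
  have "{x. x 0 = 0 \<and> x 1 = 1} = {x. \<forall>j\<in>{0,1::int}. x j = (if j = 0 then 0 else 1)}" by auto
  then show "{x. x 0 = 0 \<and> x 1 = 1} \<in> sets (bernoulli_shift coin_pmf)"
    and "measure (bernoulli_shift coin_pmf) {x. x 0 = 0 \<and> x 1 = 1} = 1/4"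
    using cylinder(1,3) by simp_all
qed

theorem theorem1p7:
  fixes a b :: "nat \<Rightarrow> int"
  assumes "inj_on a {1..}" and "inj_on b {1..}"
    and "\<forall>n\<ge>1. a n \<noteq> 0" and "\<forall>n\<ge>1. b n \<noteq> 0"
  shows "\<exists>(M :: (int \<Rightarrow> nat) measure) T S.
    prob_space M \<and> bernoulli M T \<and> bernoulli M S \<and>
    (\<exists>f g :: (int \<Rightarrow> nat) \<Rightarrow> real.
       f \<in> borel_measurable M \<and> g \<in> borel_measurable M \<and>
       (\<exists>C. AE x in M. \<bar>f x\<bar> \<le> C) \<and> (\<exists>C. AE x in M. \<bar>g x\<bar> \<le> C) \<and>
       \<not> convergent (\<lambda>N. (\<Sum>n=1..N. \<integral>x. f (ipow M T (a n) x) * g (ipow M S (b n) x) \<partial>M) / real N)) \<and>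
    (\<exists>A\<in>sets M. measure M A > 0 \<and>
       (\<forall>n\<ge>1. measure M (ipow M T (a n) -` A \<inter> ipow M S (b n) -` A \<inter> space M) = 0))"
proof -
  obtain \<pi> where \<pi>: "bij \<pi>" "\<pi> 0 = 0" "\<pi> 1 = 1" "\<forall>n\<ge>1. \<pi> (4*b n) = 4*a n + 1"
      "\<forall>n\<ge>1. \<pi> (4*b n + 1) = (if doubling_block n then 4*a n else 4*a n + 2)"
    using interleaving_permutation[OF assms] by blast
  define M where "M = bernoulli_shift coin_pmf"
  define T where "T = conj_shift id 1"
  define S where "S = conj_shift \<pi> 1"
  define f :: "(int \<Rightarrow> nat) \<Rightarrow> real" where "f = indicator {x. x 0 = 0}"
  define g :: "(int \<Rightarrow> nat) \<Rightarrow> real" where "g = indicator {x. x 1 = 0}"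
  define A where "A = {x :: int \<Rightarrow> nat. x 0 = 0 \<and> x 1 = 1}"
  have powers: "ipow M T m = conj_shift id m" "ipow M S m = conj_shift \<pi> m" for m
    unfolding M_def T_def S_def using \<pi>(1) by (simp_all add: ipow_conj_shift)
  have "(\<integral>x. f (ipow M T (a n) x) * g (ipow M S (b n) x) \<partial>M) = (if doubling_block n then 1/2 else 1/4)"
    if "n \<ge> 1" for n
    using coordinate_correlation[OF \<pi>(1,3), of "a n" "b n"] \<pi>(5) that
    unfolding powers unfolding M_def f_def g_def by (simp add: add.commute)
  then have averages: "\<not> convergent (\<lambda>N. (\<Sum>n=1..N. \<integral>x. f (ipow M T (a n) x) * g (ipow M S (b n) x) \<partial>M) / real N)"
    by (rule cesaro_averages_diverge)
  have A: "A \<in> sets M" "measure M A > 0"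
    unfolding M_def A_def using two_coordinate_event by simp_all
  have disjoint: "\<forall>n\<ge>1. measure M (ipow M T (a n) -` A \<inter> ipow M S (b n) -` A \<inter> space M) = 0"
    using shifted_cylinders_disjoint[OF \<pi>(1,2)] \<pi>(4) by (simp add: powers A_def)
  have systems: "prob_space M" "bernoulli M T" "bernoulli M S"
    unfolding M_def T_def S_def using \<pi>(1)
    by (simp_all add: prob_space_bernoulli_shift bernoulli_conj_shift)
  have observables: "f \<in> borel_measurable M" "g \<in> borel_measurable M"
      "AE x in M. \<bar>f x\<bar> \<le> 1" "AE x in M. \<bar>g x\<bar> \<le> 1"
    unfolding f_def g_def M_def using coordinate_set_sets[where B="{0}"] by simp_all
  show ?thesis
    using systems observables averages A disjoint by blast
qed

end
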